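(* Let $d\ge2$ and $\alpha_1,\dots,\alpha_d\in(0,1)$. Let $\mathcal H=\mathbb C^{d+1}$ with orthonormal basis $e_1,\dots,e_{d+1}$ and $\Omega=e_1$. For each $i$, let $P_i$ be the orthogonal projection onto $\mathrm{span}(e_1,e_{i+1})$, let $p_i\le P_i$ be a projection in $\mathcal B(\mathrm{span}(e_1,e_{i+1}))\cong M_2(\mathbb C)$ (extended by $0$ to $\mathcal H$) with $\langle p_ie_1,e_1\rangle=\alpha_i$, and let $p_i^\circ=p_i-\alpha_iP_i$. Then the algebra generated by $p_1^\circ,\dots,p_d^\circ$ (equivalently, the algebra generated by the non-unital embeddings $\mathrm{span}\{P_i,p_i\}\cong\underset{\alpha_i}{\overset{p_i}{\mathbb C}}\oplus\underset{1-\alpha_i}{\overset{P_i-p_i}{\mathbb C}}$, $1\le i\le d$, which are Boolean independent with respect to the vector state $\langle\cdot\,e_1,e_1\rangle$) is all of $M_{d+1}(\mathbb C)$. That is, the Boolean product of the algebras $\underset{\alpha_i}{\overset{p_i}{\mathbb C}}\oplus\underset{1-\alpha_i}{\overset{1-p_i}{\mathbb C}}$, $1\le i\le d$, is isomorphic to $M_{d+1}(\mathbb C)$ with a vector state.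
   Context: The Boolean product of pointed $*$-probability spaces $(\mathcal B_i,\phi_i)$ represented on $\mathcal H_i=\mathbb C\Omega_i\oplus\mathcal H_i^\circ$ is the algebra generated by the non-unital representations of the $\mathcal B_i$ on $\mathcal H=\mathbb C\Omega\oplus\bigoplus_i\mathcal H_i^\circ$, where $\mathcal B_i$ acts on $\mathbb C\Omega\oplus\mathcal H_i^\circ$ as on $\mathcal H_i$ (identifying $\Omega$ with $\Omega_i$) and by $0$ on $\mathcal H_j^\circ$, $j\ne i$, with the vector state of $\Omega$. Here each $\mathcal H_i^\circ$ is one-dimensional. *)

theory Defs
  imports "Jordan_Normal_Form.Schur_Decomposition"
begin

inductive_set gen_alg :: "complex mat set \<Rightarrow> complex mat set" for S where
  gen: "A \<in> S \<Longrightarrow> A \<in> gen_alg S"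
| add: "A \<in> gen_alg S \<Longrightarrow> B \<in> gen_alg S \<Longrightarrow> A + B \<in> gen_alg S"
| smult: "A \<in> gen_alg S \<Longrightarrow> c \<cdot>\<^sub>m A \<in> gen_alg S"
| mult: "A \<in> gen_alg S \<Longrightarrow> B \<in> gen_alg S \<Longrightarrow> A * B \<in> gen_alg S"

text \<open>Orthogonal projection onto span(e_0, e_i) in C^(d+1) (0-based indices: Omega = e_0).\<close>
definition proj2 :: "nat \<Rightarrow> nat \<Rightarrow> complex mat" where
  "proj2 d i = mat (d+1) (d+1) (\<lambda>(j,k). if j = k \<and> (j = 0 \<or> j = i) then 1 else 0)"

end

theory Submission
  imports Defs
begin

text \<open>Write \<open>E\<^sub>a\<^sub>b\<close> for the matrix units and \<open>q\<^sub>i = p\<^sub>i - \<alpha>\<^sub>i P\<^sub>i\<close>.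
  Since \<open>p\<^sub>i\<close> is a projection supported on \<open>span(e\<^sub>0, e\<^sub>i)\<close> with \<open>p\<^sub>i(0,0) = \<alpha>\<^sub>i \<in> (0,1)\<close>,
  idempotence forces \<open>|p\<^sub>i(0,i)|\<^sup>2 = \<alpha>\<^sub>i(1 - \<alpha>\<^sub>i) \<noteq> 0\<close> and \<open>p\<^sub>i(i,i) = 1 - \<alpha>\<^sub>i\<close>, so
  \<open>q\<^sub>i = \<beta>\<^sub>i E\<^sub>0\<^sub>i + \<beta>\<^sub>i\<^sup>* E\<^sub>i\<^sub>0 + (1 - 2\<alpha>\<^sub>i) E\<^sub>i\<^sub>i\<close> with \<open>\<beta>\<^sub>i \<noteq> 0\<close>.
  For \<open>i \<noteq> j\<close> the product \<open>q\<^sub>i q\<^sub>j\<close> is a nonzero multiple of \<open>E\<^sub>i\<^sub>j\<close>; as \<open>d \<ge> 2\<close> this also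
  gives \<open>E\<^sub>i\<^sub>i = E\<^sub>i\<^sub>j E\<^sub>j\<^sub>i\<close>. Multiplying \<open>q\<^sub>i\<close> by \<open>E\<^sub>i\<^sub>i\<close> on either side isolates \<open>E\<^sub>0\<^sub>i\<close> and
  \<open>E\<^sub>i\<^sub>0\<close>, and \<open>E\<^sub>0\<^sub>0 = E\<^sub>0\<^sub>1 E\<^sub>1\<^sub>0\<close>. An algebra containing all matrix units is the full matrix algebra.\<close>

definition unit_mat :: "nat \<Rightarrow> nat \<Rightarrow> nat \<Rightarrow> 'a :: zero_neq_one mat" where
  "unit_mat n a b = mat n n (\<lambda>(x, y). if x = a \<and> y = b then 1 else 0)"

lemma unit_mat_carrier [simp]: "unit_mat n a b \<in> carrier_mat n n"
  by (simp add: unit_mat_def)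

lemma dim_unit_mat [simp]: "dim_row (unit_mat n a b) = n" "dim_col (unit_mat n a b) = n"
  by (simp_all add: unit_mat_def)

lemma index_unit_mat [simp]:
  "x < n \<Longrightarrow> y < n \<Longrightarrow> unit_mat n a b $$ (x, y) = (if x = a \<and> y = b then 1 else 0)"
  by (simp add: unit_mat_def)

lemma index_mult_mat_supported:
  fixes A B :: "'a :: semiring_0 mat"
  assumes "A \<in> carrier_mat n m" "B \<in> carrier_mat m l" "x < n" "y < l" "K \<subseteq> {..<m}"
    and "\<And>k. k < m \<Longrightarrow> k \<notin> K \<Longrightarrow> A $$ (x, k) * B $$ (k, y) = 0"
  shows "(A * B) $$ (x, y) = (\<Sum>k\<in>K. A $$ (x, k) * B $$ (k, y))"
proof -
  have "(A * B) $$ (x, y) = (\<Sum>k<m. A $$ (x, k) * B $$ (k, y))"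
    using assms(1-4) by (simp add: scalar_prod_def atLeast0LessThan)
  also have "\<dots> = (\<Sum>k\<in>K. A $$ (x, k) * B $$ (k, y))"
    using assms(5,6) by (intro sum.mono_neutral_right) auto
  finally show ?thesis .
qed

lemma index_unit_mat_mult:
  fixes X :: "'a :: semiring_1 mat"
  assumes "c < n" "X \<in> carrier_mat n l" "x < n" "y < l"
  shows "(unit_mat n a c * X) $$ (x, y) = (if x = a then X $$ (c, y) else 0)"
  using index_mult_mat_supported[of _ n n X l x y "{c}"] assms by simp

lemma index_mult_unit_mat:
  fixes X :: "'a :: semiring_1 mat"
  assumes "c < n" "X \<in> carrier_mat l n" "x < l" "y < n"
  shows "(X * unit_mat n c b) $$ (x, y) = (if y = b then X $$ (x, c) else 0)"
  using index_mult_mat_supported[of X l n _ n x y "{c}"] assms by simp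

lemma unit_mat_mult_unit_mat:
  "c < n \<Longrightarrow> unit_mat n a c * unit_mat n c b = (unit_mat n a b :: 'a :: semiring_1 mat)"
  by (rule eq_matI) (auto simp: index_unit_mat_mult[where n = n and l = n] simp del: index_mult_mat(1))

lemma gen_alg_carrier_mat:
  assumes "S \<subseteq> carrier_mat n n" "A \<in> gen_alg S"
  shows "A \<in> carrier_mat n n"
  using assms(2) by induction (use assms(1) in auto)

lemma gen_alg_smult_add_cancel:
  assumes "c \<noteq> 0" "X \<in> carrier_mat n n" "B \<in> carrier_mat n n"
    and "c \<cdot>\<^sub>m X + B \<in> gen_alg S" "B \<in> gen_alg S"
  shows "X \<in> gen_alg S"
proof -
  have "X = inverse c \<cdot>\<^sub>m ((c \<cdot>\<^sub>m X + B) + (-1) \<cdot>\<^sub>m B)"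
    using assms(1-3) by (intro eq_matI) auto
  then show ?thesis
    using assms(4,5) by (metis gen_alg.add gen_alg.smult)
qed

lemma carrier_mat_subset_gen_alg:
  assumes units: "\<And>a b. a < n \<Longrightarrow> b < n \<Longrightarrow> unit_mat n a b \<in> gen_alg S" and "0 < n"
  shows "carrier_mat n n \<subseteq> gen_alg S"
proof
  fix A :: "complex mat"
  assume A: "A \<in> carrier_mat n n"
  define restrict where "restrict F = mat n n (\<lambda>ab. if ab \<in> F then A $$ ab else 0)" for F
  have "restrict F \<in> gen_alg S" if "finite F" "F \<subseteq> {..<n} \<times> {..<n}" for F
    using that
  proof (induction F rule: finite_induct)
    case empty
    have "restrict {} = 0 \<cdot>\<^sub>m unit_mat n 0 0"
      by (rule eq_matI) (auto simp: restrict_def)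
    then show ?case
      using units[OF \<open>0 < n\<close> \<open>0 < n\<close>] by (simp add: gen_alg.smult)
  next
    case (insert ab F)
    obtain a b where ab: "ab = (a, b)" "a < n" "b < n"
      using insert.prems by auto
    have "restrict (insert ab F) = restrict F + A $$ (a, b) \<cdot>\<^sub>m unit_mat n a b"
      using insert.hyps(2) ab by (intro eq_matI) (auto simp: restrict_def)
    then show ?case
      using insert ab units by (simp add: gen_alg.add gen_alg.smult)
  qed
  moreover have "restrict ({..<n} \<times> {..<n}) = A"
    using A by (intro eq_matI) (auto simp: restrict_def)
  ultimately show "A \<in> gen_alg S"
    by (metis finite_SigmaI finite_lessThan order_refl)
qed

lemma gen_alg_eq_carrier_mat:
  assumes "S \<subseteq> carrier_mat n n" "0 < n"
    and "\<And>a b. a < n \<Longrightarrow> b < n \<Longrightarrow> unit_mat n a b \<in> gen_alg S"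
  shows "gen_alg S = carrier_mat n n"
  using gen_alg_carrier_mat[OF assms(1)] carrier_mat_subset_gen_alg[OF assms(3,2)] by blast

definition spoke_mat :: "nat \<Rightarrow> nat \<Rightarrow> 'a \<Rightarrow> 'a \<Rightarrow> 'a \<Rightarrow> 'a :: comm_ring_1 mat" where
  "spoke_mat n i \<beta> \<beta>' \<gamma> = \<beta> \<cdot>\<^sub>m unit_mat n 0 i + \<beta>' \<cdot>\<^sub>m unit_mat n i 0 + \<gamma> \<cdot>\<^sub>m unit_mat n i i"

lemma spoke_mat_carrier [simp]: "spoke_mat n i \<beta> \<beta>' \<gamma> \<in> carrier_mat n n"
  by (simp add: spoke_mat_def)

lemma dim_spoke_mat [simp]: "dim_row (spoke_mat n i \<beta> \<beta>' \<gamma>) = n" "dim_col (spoke_mat n i \<beta> \<beta>' \<gamma>) = n"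
  by (simp_all add: spoke_mat_def)

lemma index_spoke_mat [simp]:
  "0 < i \<Longrightarrow> x < n \<Longrightarrow> y < n \<Longrightarrow> spoke_mat n i \<beta> \<beta>' \<gamma> $$ (x, y) =
     (if x = 0 \<and> y = i then \<beta> else if x = i \<and> y = 0 then \<beta>' else if x = i \<and> y = i then \<gamma> else 0)"
  by (simp add: spoke_mat_def)

lemma spoke_mat_mult_spoke_mat:
  assumes "0 < i" "0 < j" "i \<noteq> j" "i < n" "j < n"
  shows "spoke_mat n i \<beta> \<beta>' \<gamma> * spoke_mat n j \<delta> \<delta>' \<epsilon> = (\<beta>' * \<delta>) \<cdot>\<^sub>m unit_mat n i j"
proof (rule eq_matI)
  fix x y assume "x < dim_row ((\<beta>' * \<delta>) \<cdot>\<^sub>m unit_mat n i j)" "y < dim_col ((\<beta>' * \<delta>) \<cdot>\<^sub>m unit_mat n i j)"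
  then have "x < n" "y < n" by simp_all
  \<comment> \<open>the spokes of different indices only meet in the index \<open>0\<close>\<close>
  then show "(spoke_mat n i \<beta> \<beta>' \<gamma> * spoke_mat n j \<delta> \<delta>' \<epsilon>) $$ (x, y) = ((\<beta>' * \<delta>) \<cdot>\<^sub>m unit_mat n i j) $$ (x, y)"
    using assms index_mult_mat_supported[of "spoke_mat n i \<beta> \<beta>' \<gamma>" n n "spoke_mat n j \<delta> \<delta>' \<epsilon>" n x y "{0}"]
    by auto
qed simp_all

lemma spoke_mat_mult_unit_mat:
  assumes "0 < i" "i < n"
  shows "spoke_mat n i \<beta> \<beta>' \<gamma> * unit_mat n i i = \<beta> \<cdot>\<^sub>m unit_mat n 0 i + \<gamma> \<cdot>\<^sub>m unit_mat n i i"
  using assms by (intro eq_matI) (auto simp: index_mult_unit_mat[where l = n] simp del: index_mult_mat(1))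

lemma unit_mat_mult_spoke_mat:
  assumes "0 < i" "i < n"
  shows "unit_mat n i i * spoke_mat n i \<beta> \<beta>' \<gamma> = \<beta>' \<cdot>\<^sub>m unit_mat n i 0 + \<gamma> \<cdot>\<^sub>m unit_mat n i i"
  using assms by (intro eq_matI) (auto simp: index_unit_mat_mult[where l = n] simp del: index_mult_mat(1))

lemma unit_mat_in_gen_alg_spoke_mats:
  fixes \<beta> \<beta>' \<gamma> :: "nat \<Rightarrow> complex"
  assumes "2 \<le> d" "\<And>i. i \<in> {1..d} \<Longrightarrow> \<beta> i \<noteq> 0" "\<And>i. i \<in> {1..d} \<Longrightarrow> \<beta>' i \<noteq> 0"
    and "a \<le> d" "b \<le> d"
  shows "unit_mat (d+1) a b \<in> gen_alg ((\<lambda>i. spoke_mat (d+1) i (\<beta> i) (\<beta>' i) (\<gamma> i)) ` {1..d})"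
proof -
  define n where "n = d + 1"
  define q where "q i = spoke_mat n i (\<beta> i) (\<beta>' i) (\<gamma> i)" for i
  let ?G = "gen_alg (q ` {1..d})"
  have q: "q i \<in> ?G" if "i \<in> {1..d}" for i
    using that by (simp add: gen_alg.gen)
  have off_diagonal: "unit_mat n i j \<in> ?G" if "i \<in> {1..d}" "j \<in> {1..d}" "i \<noteq> j" for i j
  proof -
    have "q i * q j = (\<beta>' i * \<beta> j) \<cdot>\<^sub>m unit_mat n i j"
      using that by (simp add: q_def n_def spoke_mat_mult_spoke_mat)
    moreover have "\<beta>' i * \<beta> j \<noteq> 0"
      using that assms(2,3) by simp
    ultimately have "unit_mat n i j = inverse (\<beta>' i * \<beta> j) \<cdot>\<^sub>m (q i * q j)"
      by (intro eq_matI) (auto simp: field_simps)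
    then show ?thesis
      using q that by (metis gen_alg.mult gen_alg.smult)
  qed
  have diagonal: "unit_mat n i i \<in> ?G" if "i \<in> {1..d}" for i
  proof -
    define j where "j = (if i = 1 then 2 else 1 :: nat)"
    have j: "j \<in> {1..d}" "i \<noteq> j"
      using that assms(1) by (auto simp: j_def)
    have "unit_mat n i i = (unit_mat n i j * unit_mat n j i :: complex mat)"
      using j by (simp add: unit_mat_mult_unit_mat n_def)
    then show ?thesis
      using off_diagonal that j by (metis gen_alg.mult)
  qed
  have zero_row_column_spoke: "unit_mat n 0 i \<in> ?G \<and> unit_mat n i 0 \<in> ?G" if "i \<in> {1..d}" for i
  proof
    have i: "0 < i" "i < n"
      using that by (auto simp: n_def)
    have "q i * unit_mat n i i \<in> ?G" "unit_mat n i i * q i \<in> ?G"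
      using q[OF that] diagonal[OF that] by (simp_all add: gen_alg.mult)
    then have "\<beta> i \<cdot>\<^sub>m unit_mat n 0 i + \<gamma> i \<cdot>\<^sub>m unit_mat n i i \<in> ?G"
      "\<beta>' i \<cdot>\<^sub>m unit_mat n i 0 + \<gamma> i \<cdot>\<^sub>m unit_mat n i i \<in> ?G"
      by (simp_all add: q_def spoke_mat_mult_unit_mat[OF i] unit_mat_mult_spoke_mat[OF i])
    moreover have "\<gamma> i \<cdot>\<^sub>m unit_mat n i i \<in> ?G"
      using diagonal[OF that] by (rule gen_alg.smult)
    moreover have "\<beta> i \<noteq> 0" "\<beta>' i \<noteq> 0"
      using that assms(2,3) by simp_all
    ultimately show "unit_mat n 0 i \<in> ?G" "unit_mat n i 0 \<in> ?G"
      by (metis gen_alg_smult_add_cancel smult_carrier_mat unit_mat_carrier)+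
  qed
  have "unit_mat n 0 0 = (unit_mat n 0 1 * unit_mat n 1 0 :: complex mat)"
    using assms(1) by (simp add: unit_mat_mult_unit_mat n_def)
  then have "unit_mat n 0 0 \<in> ?G"
    using zero_row_column_spoke[of 1] assms(1) by (simp add: gen_alg.mult)
  then have zero_row_column: "unit_mat n 0 c \<in> ?G \<and> unit_mat n c 0 \<in> ?G" if "c \<le> d" for c
    using zero_row_column_spoke[of c] that by (cases "c = 0") auto
  moreover have "unit_mat n a b = (unit_mat n a 0 * unit_mat n 0 b :: complex mat)"
    by (simp add: unit_mat_mult_unit_mat n_def)
  ultimately show ?thesis
    using zero_row_column[OF assms(4)] zero_row_column[OF assms(5)]
    unfolding n_def q_def by (metis gen_alg.mult)
qed

lemma dim_proj2 [simp]: "dim_row (proj2 d i) = d+1" "dim_col (proj2 d i) = d+1"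
  by (simp_all add: proj2_def)

lemma index_proj2:
  "a < d+1 \<Longrightarrow> b < d+1 \<Longrightarrow> proj2 d i $$ (a, b) = (if a = b \<and> (a = 0 \<or> a = i) then 1 else 0)"
  by (simp add: proj2_def)

lemma index_proj2_mult:
  assumes "A \<in> carrier_mat (d+1) m" "a < d+1" "b < m"
  shows "(proj2 d i * A) $$ (a, b) = (if a = 0 \<or> a = i then A $$ (a, b) else 0)"
  using index_mult_mat_supported[of "proj2 d i" "d+1" "d+1" A m a b "{a}"] assms
  by (auto simp: proj2_def)

lemma index_mat_adjoint:
  "A \<in> carrier_mat n m \<Longrightarrow> a < m \<Longrightarrow> b < n \<Longrightarrow> mat_adjoint A $$ (a, b) = conjugate (A $$ (b, a))"
  unfolding mat_adjoint_def by (simp add: mat_of_rows_def)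

lemma projection_below_proj2_vanishes:
  fixes p :: "complex mat"
  assumes p: "p \<in> carrier_mat (d+1) (d+1)" "mat_adjoint p = p" "proj2 d i * p = p"
    and ab: "a < d+1" "b < d+1" "a \<notin> {0, i} \<or> b \<notin> {0, i}"
  shows "p $$ (a, b) = 0"
proof -
  have rows: "p $$ (x, y) = 0" if "x < d+1" "y < d+1" "x \<notin> {0, i}" for x y
    using index_proj2_mult[OF p(1) that(1,2), of i] that(3) p(3) by simp
  have "p $$ (a, b) = conjugate (p $$ (b, a))"
    using index_mat_adjoint[OF p(1) ab(1,2)] p(2) by simp
  then show ?thesis
    using ab rows by auto
qed

lemma projection_below_proj2_corner:
  fixes p :: "complex mat" and \<alpha> :: real
  assumes i: "0 < i" "i \<le> d" and \<alpha>: "0 < \<alpha>" "\<alpha> < 1"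
    and p: "p \<in> carrier_mat (d+1) (d+1)" "p * p = p" "mat_adjoint p = p" "proj2 d i * p = p"
    and p00: "p $$ (0, 0) = of_real \<alpha>"
  shows "p $$ (0, i) \<noteq> 0" "p $$ (i, 0) = cnj (p $$ (0, i))" "p $$ (i, i) = 1 - of_real \<alpha>"
proof -
  have square: "p $$ (a, b) = p $$ (a, 0) * p $$ (0, b) + p $$ (a, i) * p $$ (i, b)"
    if "a < d+1" "b < d+1" for a b
  proof -
    have "p $$ (a, b) = (p * p) $$ (a, b)"
      using p(2) by simp
    also have "\<dots> = (\<Sum>k\<in>{0, i}. p $$ (a, k) * p $$ (k, b))"
      using that i projection_below_proj2_vanishes[OF p(1,3,4)]
      by (intro index_mult_mat_supported[OF p(1) p(1)]) auto
    finally show ?thesis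
      using i by simp
  qed
  define \<beta> where "\<beta> = p $$ (0, i)"
  show conj: "p $$ (i, 0) = cnj (p $$ (0, i))"
    using index_mat_adjoint[OF p(1), of i 0] i p(3) by simp
  have "of_real \<alpha> = of_real \<alpha> * of_real \<alpha> + \<beta> * cnj \<beta>"
    using square[of 0 0] p00 conj unfolding \<beta>_def by simp
  then have "\<beta> * cnj \<beta> = of_real (\<alpha> * (1 - \<alpha>))"
    by (simp add: algebra_simps)
  moreover have "\<alpha> * (1 - \<alpha>) \<noteq> 0"
    using \<alpha> by simp
  ultimately show "p $$ (0, i) \<noteq> 0"
    unfolding \<beta>_def by fastforce
  moreover have "\<beta> = of_real \<alpha> * \<beta> + \<beta> * p $$ (i, i)"
    using square[of 0 i] p00 i unfolding \<beta>_def by simp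
  then have "\<beta> * (1 - of_real \<alpha> - p $$ (i, i)) = 0"
    by (simp add: algebra_simps)
  ultimately show "p $$ (i, i) = 1 - of_real \<alpha>"
    unfolding \<beta>_def by simp
qed

lemma centred_projection_eq_spoke_mat:
  fixes p :: "complex mat" and \<alpha> :: real
  assumes i: "0 < i" "i \<le> d" and \<alpha>: "0 < \<alpha>" "\<alpha> < 1"
    and p: "p \<in> carrier_mat (d+1) (d+1)" "p * p = p" "mat_adjoint p = p" "proj2 d i * p = p"
    and p00: "p $$ (0, 0) = of_real \<alpha>"
  shows "p - of_real \<alpha> \<cdot>\<^sub>m proj2 d i
    = spoke_mat (d+1) i (p $$ (0, i)) (cnj (p $$ (0, i))) (1 - 2 * of_real \<alpha>)"
proof (rule eq_matI)
  fix a b assume "a < dim_row (spoke_mat (d+1) i (p $$ (0, i)) (cnj (p $$ (0, i))) (1 - 2 * of_real \<alpha>))"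
    "b < dim_col (spoke_mat (d+1) i (p $$ (0, i)) (cnj (p $$ (0, i))) (1 - 2 * of_real \<alpha>))"
  then have ab: "a < d+1" "b < d+1"
    by simp_all
  have entry: "(p - of_real \<alpha> \<cdot>\<^sub>m proj2 d i) $$ (a, b) = p $$ (a, b) - of_real \<alpha> * proj2 d i $$ (a, b)"
    using ab p(1) by simp
  consider "a \<notin> {0, i} \<or> b \<notin> {0, i}" | "a = 0" "b = 0" | "a = 0" "b = i" | "a = i" "b = 0" | "a = i" "b = i"
    by blast
  then show "(p - of_real \<alpha> \<cdot>\<^sub>m proj2 d i) $$ (a, b)
    = spoke_mat (d+1) i (p $$ (0, i)) (cnj (p $$ (0, i))) (1 - 2 * of_real \<alpha>) $$ (a, b)"
  proof cases
    case 1
    then show ?thesis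
      using entry ab i projection_below_proj2_vanishes[OF p(1,3,4) ab] by (auto simp: index_proj2)
  qed (use entry ab i p00 projection_below_proj2_corner[OF i \<alpha> p p00] in \<open>auto simp: index_proj2\<close>)
qed (use p in auto)

theorem corollary29:
  fixes d :: nat and \<alpha> :: "nat \<Rightarrow> real" and p :: "nat \<Rightarrow> complex mat"
  assumes "d \<ge> 2"
    and "\<And>i. i \<in> {1..d} \<Longrightarrow> 0 < \<alpha> i \<and> \<alpha> i < 1"
    and "\<And>i. i \<in> {1..d} \<Longrightarrow> p i \<in> carrier_mat (d+1) (d+1)"
    and "\<And>i. i \<in> {1..d} \<Longrightarrow> p i * p i = p i"
    and "\<And>i. i \<in> {1..d} \<Longrightarrow> mat_adjoint (p i) = p i"
    and "\<And>i. i \<in> {1..d} \<Longrightarrow> proj2 d i * p i = p i"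
    and "\<And>i. i \<in> {1..d} \<Longrightarrow> p i $$ (0,0) = complex_of_real (\<alpha> i)"
  shows "gen_alg ((\<lambda>i. p i - complex_of_real (\<alpha> i) \<cdot>\<^sub>m proj2 d i) ` {1..d})
         = carrier_mat (d+1) (d+1)"
proof -
  define \<beta> where "\<beta> i = p i $$ (0, i)" for i
  have "p i - of_real (\<alpha> i) \<cdot>\<^sub>m proj2 d i = spoke_mat (d+1) i (\<beta> i) (cnj (\<beta> i)) (1 - 2 * of_real (\<alpha> i))"
    if "i \<in> {1..d}" for i
    using that assms(2-7)[OF that] unfolding \<beta>_def by (intro centred_projection_eq_spoke_mat) auto
  then have generators: "(\<lambda>i. p i - of_real (\<alpha> i) \<cdot>\<^sub>m proj2 d i) ` {1..d}
      = (\<lambda>i. spoke_mat (d+1) i (\<beta> i) (cnj (\<beta> i)) (1 - 2 * of_real (\<alpha> i))) ` {1..d}"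
    by (rule image_cong[OF refl])
  have "\<beta> i \<noteq> 0" if "i \<in> {1..d}" for i
    using that assms(2-7)[OF that] unfolding \<beta>_def by (intro projection_below_proj2_corner(1)[of i d "\<alpha> i"]) auto
  then show ?thesis
    unfolding generators using unit_mat_in_gen_alg_spoke_mats[OF assms(1)]
    by (intro gen_alg_eq_carrier_mat) auto
qed

end
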